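(* If the optimum $\widehat{\boldsymbol \theta}$ in (S1) exists then it is unique, and the optimum $\check{\boldsymbol \mu}$ in (S2) exists and is unique too.
   Context: Let $\mathcal{E}$ be a minimally represented regular exponential family with densities $\exp\{\langle\boldsymbol\theta,\boldsymbol t(\boldsymbol x)\rangle-A(\boldsymbol\theta)\}$, open canonical parameter space $\Theta$, mean parameter space $M$ (with $\boldsymbol\mu=\nabla A(\boldsymbol\theta)$), sufficient statistic split as $\boldsymbol t=(\boldsymbol u,\boldsymbol v)$ and mixed parametrization $(\boldsymbol\mu_u,\boldsymbol\theta_v)\in M_u\times\Theta_v$. Let $M_u'\subseteq M_u$, $\Theta_v'\subseteq\Theta_v$ be convex and relatively closed, and $C_u=\{\boldsymbol\mu\in M:\boldsymbol\mu_u\in M_u'\}$, $C_v=\{\boldsymbol\theta\in\Theta:\boldsymbol\theta_v\in\Theta_v'\}$. Let $A^*$ be the Fenchel conjugate of $A$ and $\boldsymbol K(\boldsymbol\mu_1,\boldsymbol\theta_2)=-\langle\boldsymbol\mu_1,\boldsymbol\theta_2\rangle+A^*(\boldsymbol\mu_1)+A(\boldsymbol\theta_2)$ the Kullback–Leibler divergence, strictly convex in each argument. For the data average sufficient statistic $\boldsymbol t$ (in the closure of $M$): step (S1) minimizes $\boldsymbol K(\boldsymbol t,\boldsymbol\theta)$ over $\boldsymbol\theta\in C_v$, with optimum $\widehat{\boldsymbol\theta}$; step (S2) minimizes $\boldsymbol K(\boldsymbol\mu,\widehat{\boldsymbol\theta})$ over $\boldsymbol\mu\in C_u$, with optimum $\check{\boldsymbol\mu}$.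 *)

theory Defs
  imports "HOL-Probability.Probability"
begin

text \<open>Exponential family with base measure nu on a sample space 'x and sufficient
statistic T with values in a Euclidean space 'p; densities exp(<theta, T x> - A theta)
with respect to nu.\<close>

definition nat_param_space :: "'x measure \<Rightarrow> ('x \<Rightarrow> 'p::euclidean_space) \<Rightarrow> 'p set" where
  "nat_param_space \<nu> T = {\<theta>. integrable \<nu> (\<lambda>x. exp (\<theta> \<bullet> T x))}"

definition log_partition :: "'x measure \<Rightarrow> ('x \<Rightarrow> 'p::euclidean_space) \<Rightarrow> 'p \<Rightarrow> real" where
  "log_partition \<nu> T \<theta> = ln (\<integral>x. exp (\<theta> \<bullet> T x) \<partial>\<nu>)"

definition regular_minimal_expfam :: "'x measure \<Rightarrow> ('x \<Rightarrow> 'p::euclidean_space) \<Rightarrow> bool" where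
  "regular_minimal_expfam \<nu> T \<longleftrightarrow>
     T \<in> borel_measurable \<nu> \<and>
     open (nat_param_space \<nu> T) \<and> nat_param_space \<nu> T \<noteq> {} \<and>
     (\<forall>a c. (AE x in \<nu>. a \<bullet> T x = c) \<longrightarrow> a = 0)"

definition mean_param_space :: "'x measure \<Rightarrow> ('x \<Rightarrow> 'p::euclidean_space) \<Rightarrow> 'p set" where
  "mean_param_space \<nu> T =
     {\<mu>. \<exists>\<theta>\<in>nat_param_space \<nu> T.
           (log_partition \<nu> T has_derivative (\<lambda>h. \<mu> \<bullet> h)) (at \<theta>)}"

text \<open>Fenchel conjugate of A (A taken as +infinity outside Theta).\<close>
definition fenchel_conj :: "'x measure \<Rightarrow> ('x \<Rightarrow> 'p::euclidean_space) \<Rightarrow> 'p \<Rightarrow> ereal" where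
  "fenchel_conj \<nu> T \<mu> = (SUP \<theta>\<in>nat_param_space \<nu> T. ereal (\<mu> \<bullet> \<theta> - log_partition \<nu> T \<theta>))"

definition KL :: "'x measure \<Rightarrow> ('x \<Rightarrow> 'p::euclidean_space) \<Rightarrow> 'p \<Rightarrow> 'p \<Rightarrow> ereal" where
  "KL \<nu> T \<mu> \<theta> = ereal (- (\<mu> \<bullet> \<theta>)) + fenchel_conj \<nu> T \<mu> + ereal (log_partition \<nu> T \<theta>)"

definition C_u :: "'x measure \<Rightarrow> ('x \<Rightarrow> 'a::euclidean_space \<times> 'b::euclidean_space) \<Rightarrow> 'a set \<Rightarrow> ('a \<times> 'b) set" where
  "C_u \<nu> T Mu' = {\<mu> \<in> mean_param_space \<nu> T. fst \<mu> \<in> Mu'}"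

definition C_v :: "'x measure \<Rightarrow> ('x \<Rightarrow> 'a::euclidean_space \<times> 'b::euclidean_space) \<Rightarrow> 'b set \<Rightarrow> ('a \<times> 'b) set" where
  "C_v \<nu> T Thv' = {\<theta> \<in> nat_param_space \<nu> T. snd \<theta> \<in> Thv'}"

text \<open>Since A*(t) does not
depend on theta' (and may be +infinity for t on the boundary of M), the objective is taken
as K(t,theta') - A*(t) = A(theta') - <t,theta'>.\<close>
definition S1_opt :: "'x measure \<Rightarrow> ('x \<Rightarrow> 'a::euclidean_space \<times> 'b::euclidean_space) \<Rightarrow> 'b set \<Rightarrow> ('a \<times> 'b) \<Rightarrow> ('a \<times> 'b) \<Rightarrow> bool" where
  "S1_opt \<nu> T Thv' t \<theta> \<longleftrightarrow> \<theta> \<in> C_v \<nu> T Thv' \<and>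
     (\<forall>\<theta>'\<in>C_v \<nu> T Thv'. log_partition \<nu> T \<theta> - t \<bullet> \<theta> \<le> log_partition \<nu> T \<theta>' - t \<bullet> \<theta>')"

definition S2_opt :: "'x measure \<Rightarrow> ('x \<Rightarrow> 'a::euclidean_space \<times> 'b::euclidean_space) \<Rightarrow> 'a set \<Rightarrow> ('a \<times> 'b) \<Rightarrow> ('a \<times> 'b) \<Rightarrow> bool" where
  "S2_opt \<nu> T Mu' \<theta>h \<mu> \<longleftrightarrow> \<mu> \<in> C_u \<nu> T Mu' \<and>
     (\<forall>\<mu>'\<in>C_u \<nu> T Mu'. KL \<nu> T \<mu> \<theta>h \<le> KL \<nu> T \<mu>' \<theta>h)"

end

theory Submission
  imports Defs
begin

text \<open>The log-partition function \<open>A\<close> is convex and differentiable on the open set \<open>\<Theta>\<close>, and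
  strictly convex because the representation is minimal; uniqueness in (S1) follows since \<open>C\<^sub>v\<close> is
  convex. For (S2) we pass to the dual problem. When \<open>\<mu> = \<nabla>A \<theta>\<close>, the divergence
  \<open>KL \<mu> \<theta>h\<close> is the Bregman divergence \<open>A \<theta>h - A \<theta> - \<mu> \<bullet> (\<theta>h - \<theta>)\<close>, and for arbitrary \<open>\<theta>\<close>
  it is a lower bound. The dual objective \<open>\<theta> \<mapsto> sup\<close> over \<open>\<mu> \<in> C\<^sub>u\<close> of \<open>A \<theta> + (\<theta>h - \<theta>) \<bullet> \<mu>\<close> has
  compact sublevel sets (by Fatou's lemma \<open>A\<close> blows up at the boundary of \<open>\<Theta>\<close>, and by strict
  convexity it grows linearly at infinity), so it attains its minimum \<open>m\<close> at some \<open>\<theta>s\<close>.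
  Directional optimality at \<open>\<theta>s\<close>, combined with a separating hyperplane, puts \<open>\<mu>0 = \<nabla>A \<theta>s\<close>
  into \<open>C\<^sub>u\<close> with \<open>KL \<mu>0 \<theta>h = A \<theta>h - m\<close>, which is a lower bound on \<open>C\<^sub>u\<close>; any other minimiser
  is a subgradient of \<open>A\<close> at \<open>\<theta>s\<close> and therefore equals \<open>\<mu>0\<close>.\<close>

lemma exp_le_quadratic: "exp (y::real) \<le> 1 + y + y\<^sup>2 * exp \<bar>y\<bar>"
proof -
  obtain t where t: "\<bar>t\<bar> \<le> \<bar>y\<bar>" "exp y = (\<Sum>m<2. y ^ m / fact m) + exp t / fact 2 * y\<^sup>2"
    using Maclaurin_exp_le[of y 2] by blast
  have "exp t \<le> exp \<bar>y\<bar>"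
    using t(1) by simp
  then have "exp t / 2 * y\<^sup>2 \<le> exp \<bar>y\<bar> * y\<^sup>2"
    using exp_gt_zero[of t] by (intro mult_right_mono) (linarith, simp)
  moreover have "exp y = 1 + y + exp t / 2 * y\<^sup>2"
    using t(2) by (simp add: eval_nat_numeral)
  ultimately show ?thesis by (simp add: mult.commute)
qed

lemma exp_le_quadratic_remainder:
  fixes y r s e :: real
  assumes y: "\<bar>y\<bar> \<le> r * s" and r: "0 \<le> r" "r \<le> e / 2" and s: "0 \<le> s" and e: "0 < e"
  shows "exp y \<le> 1 + y + r\<^sup>2 * (8 / e\<^sup>2) * exp (e * s)"
proof -
  have "0 \<le> e * s / 2"
    using e s by simp
  then have "(e * s / 2)\<^sup>2 / 2 \<le> exp (e * s / 2)"
    using exp_lower_Taylor_quadratic[of "e * s / 2"] by linarith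
  then have s2: "s\<^sup>2 \<le> 8 / e\<^sup>2 * exp (e * s / 2)"
    using e by (simp add: power_mult_distrib field_simps)
  have "y\<^sup>2 \<le> (r * s)\<^sup>2"
    using y by (metis abs_ge_zero power2_abs power_mono)
  moreover have "r * s \<le> e / 2 * s"
    using r(2) s by (rule mult_right_mono)
  then have "exp \<bar>y\<bar> \<le> exp (e * s / 2)"
    using y by simp
  ultimately have "y\<^sup>2 * exp \<bar>y\<bar> \<le> r\<^sup>2 * s\<^sup>2 * exp (e * s / 2)"
    by (intro mult_mono) (auto simp: power_mult_distrib)
  also have "\<dots> \<le> r\<^sup>2 * (8 / e\<^sup>2 * exp (e * s / 2)) * exp (e * s / 2)"
    using s2 by (intro mult_right_mono mult_left_mono) auto
  also have "\<dots> = r\<^sup>2 * (8 / e\<^sup>2) * exp (e * s)"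
    by (simp add: mult.assoc flip: exp_add)
  finally show ?thesis
    using exp_le_quadratic[of y] by linarith
qed

lemma exp_norm_le_sum_Basis:
  fixes v :: "'a::euclidean_space"
  assumes r: "0 \<le> r"
  shows "exp (r / DIM('a) * norm v) \<le> (\<Sum>i\<in>Basis. exp (r * (i \<bullet> v)) + exp (- r * (i \<bullet> v)))"
proof -
  obtain i0 where i0: "i0 \<in> Basis" "\<bar>i0 \<bullet> v\<bar> = Max ((\<lambda>i. \<bar>i \<bullet> v\<bar>) ` Basis)"
    by (metis (no_types, lifting) Max_in empty_is_image finite_Basis finite_imageI imageE nonempty_Basis)
  have "norm v \<le> (\<Sum>i\<in>Basis. \<bar>i \<bullet> v\<bar>)"
    using norm_le_l1[of v] by (simp add: inner_commute)
  also have "\<dots> \<le> DIM('a) * \<bar>i0 \<bullet> v\<bar>"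
    using sum_bounded_above[of Basis "\<lambda>i. \<bar>i \<bullet> v\<bar>" "\<bar>i0 \<bullet> v\<bar>"] i0(2) by simp
  finally have "r / DIM('a) * norm v \<le> r * \<bar>i0 \<bullet> v\<bar>"
    using r by (simp add: field_simps mult_left_mono)
  then have "exp (r / DIM('a) * norm v) \<le> exp (r * \<bar>i0 \<bullet> v\<bar>)"
    by simp
  also have "\<dots> \<le> exp (r * (i0 \<bullet> v)) + exp (- r * (i0 \<bullet> v))"
  proof (cases "0 \<le> i0 \<bullet> v")
    case True
    then show ?thesis
      using exp_gt_zero[of "- r * (i0 \<bullet> v)"] by simp
  next
    case False
    then show ?thesis
      using exp_gt_zero[of "r * (i0 \<bullet> v)"] by simp
  qed
  also have "\<dots> \<le> (\<Sum>i\<in>Basis. exp (r * (i \<bullet> v)) + exp (- r * (i \<bullet> v)))"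
    by (rule member_le_sum[OF i0(1)]) (simp_all add: add_nonneg_nonneg)
  finally show ?thesis .
qed

lemma eventually_at_right_add_scaleR_in_open:
  fixes x z :: "'a::real_normed_vector"
  assumes "open S" "x \<in> S"
  shows "\<forall>\<^sub>F t in at_right 0. x + t *\<^sub>R z \<in> S"
proof -
  have "((\<lambda>t::real. x + t *\<^sub>R z) \<longlongrightarrow> x) (at_right 0)"
    by (auto intro!: tendsto_eq_intros)
  then show ?thesis
    using assms by (rule topological_tendstoD)
qed

lemma has_derivative_directional_lower_bound:
  fixes f :: "'a::real_normed_vector \<Rightarrow> real"
  assumes f: "(f has_derivative f') (at x)"
    and le: "\<forall>\<^sub>F t in at_right 0. c * t \<le> f (x + t *\<^sub>R z) - f x"
  shows "c \<le> f' z"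
proof (rule tendsto_lowerbound)
  have "((\<lambda>t. x + t *\<^sub>R z) has_derivative (\<lambda>t. 0 + t *\<^sub>R z)) (at 0)"
    by (intro has_derivative_add has_derivative_const has_derivative_scaleR_left has_derivative_ident)
  then have "((\<lambda>t. x + t *\<^sub>R z) has_derivative (\<lambda>t. t *\<^sub>R z)) (at 0)"
    by simp
  then have "((f \<circ> (\<lambda>t. x + t *\<^sub>R z)) has_derivative (f' \<circ> (\<lambda>t. t *\<^sub>R z))) (at 0)"
    by (rule diff_chain_at) (use f in simp)
  then have "((\<lambda>t. f (x + t *\<^sub>R z)) has_derivative (\<lambda>t. f' (t *\<^sub>R z))) (at 0)"
    by (simp add: o_def)
  moreover have "f' (t *\<^sub>R z) = t * f' z" for t
    using linear_scale[OF has_derivative_linear[OF f]] by simp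
  ultimately have "((\<lambda>t. f (x + t *\<^sub>R z)) has_field_derivative f' z) (at 0)"
    by (simp add: has_field_derivative_def mult.commute[of _ "f' z"])
  then have "((\<lambda>t. (f (x + t *\<^sub>R z) - f x) / t) \<longlongrightarrow> f' z) (at 0)"
    by (simp add: has_field_derivative_iff)
  then show "((\<lambda>t. (f (x + t *\<^sub>R z) - f x) / t) \<longlongrightarrow> f' z) (at_right 0)"
    by (rule filterlim_mono) (simp_all add: at_le)
  show "\<forall>\<^sub>F t in at_right 0. c \<le> (f (x + t *\<^sub>R z) - f x) / t"
    using le eventually_at_right_less[of 0]
    by eventually_elim (simp add: field_simps)
qed simp

lemma has_derivative_directional_upper_bound:
  fixes f :: "'a::real_normed_vector \<Rightarrow> real"
  assumes f: "(f has_derivative f') (at x)"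
    and le: "\<forall>\<^sub>F t in at_right 0. f (x + t *\<^sub>R z) - f x \<le> c * t"
  shows "f' z \<le> c"
proof -
  have "\<forall>\<^sub>F t in at_right 0. - c * t \<le> - f (x + t *\<^sub>R z) - - f x"
    using le by eventually_elim simp
  then have "- c \<le> - f' z"
    by (rule has_derivative_directional_lower_bound[OF has_derivative_minus[OF f]])
  then show ?thesis
    by simp
qed

lemma convex_on_tangent_le:
  fixes f :: "'a::real_normed_vector \<Rightarrow> real"
  assumes f: "convex_on S f" and x: "x \<in> S" and y: "y \<in> S"
    and d: "(f has_derivative f') (at x)"
  shows "f x + f' (y - x) \<le> f y"
proof -
  have "\<forall>\<^sub>F t in at_right 0. f (x + t *\<^sub>R (y - x)) - f x \<le> (f y - f x) * t"
    using eventually_at_right_real[OF zero_less_one]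
  proof eventually_elim
    case (elim t)
    have "f ((1 - t) *\<^sub>R x + t *\<^sub>R y) \<le> (1 - t) * f x + t * f y"
      using elim x y by (intro convex_onD[OF f]) auto
    moreover have "(1 - t) *\<^sub>R x + t *\<^sub>R y = x + t *\<^sub>R (y - x)"
      by (simp add: algebra_simps)
    ultimately show ?case
      by (simp add: algebra_simps)
  qed
  then have "f' (y - x) \<le> f y - f x"
    by (rule has_derivative_directional_upper_bound[OF d])
  then show ?thesis
    by simp
qed

lemma subgradient_eq_derivative:
  fixes f :: "'a::real_inner \<Rightarrow> real"
  assumes S: "open S" "x \<in> S" and d: "(f has_derivative (\<lambda>h. g \<bullet> h)) (at x)"
    and sub: "\<And>y. y \<in> S \<Longrightarrow> f x + \<mu> \<bullet> (y - x) \<le> f y"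
  shows "\<mu> = g"
proof -
  define z where "z = \<mu> - g"
  have "\<forall>\<^sub>F t in at_right 0. (\<mu> \<bullet> z) * t \<le> f (x + t *\<^sub>R z) - f x"
    using eventually_at_right_add_scaleR_in_open[OF S, of z]
  proof eventually_elim
    case (elim t)
    then show ?case
      using sub[of "x + t *\<^sub>R z"] by (simp add: mult.commute)
  qed
  then have "\<mu> \<bullet> z \<le> g \<bullet> z"
    by (rule has_derivative_directional_lower_bound[OF d])
  then have "z \<bullet> z \<le> 0"
    by (simp add: z_def inner_diff_left)
  then have "z = 0"
    using inner_ge_zero[of z] by simp
  then show ?thesis
    by (simp add: z_def)
qed

lemma has_derivative_of_quadratic_error:
  fixes f :: "'a::real_normed_vector \<Rightarrow> real"
  assumes L: "bounded_linear L" and \<delta>: "0 < \<delta>"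
    and err: "\<And>h. norm h \<le> \<delta> \<Longrightarrow> \<bar>f (x + h) - f x - L h\<bar> \<le> K * (norm h)\<^sup>2"
  shows "(f has_derivative L) (at x)"
  unfolding has_derivative_at_alt
proof (intro conjI allI impI L)
  fix e :: real
  assume e: "0 < e"
  define d where "d = min \<delta> (e / (\<bar>K\<bar> + 1))"
  have "norm (f y - f x - L (y - x)) \<le> e * norm (y - x)" if y: "norm (y - x) < d" for y
  proof -
    have "\<bar>f y - f x - L (y - x)\<bar> \<le> K * (norm (y - x))\<^sup>2"
      using err[of "y - x"] y by (simp add: d_def)
    also have "\<dots> \<le> \<bar>K\<bar> * (norm (y - x))\<^sup>2"
      by (intro mult_right_mono) auto
    also have "\<dots> = (\<bar>K\<bar> * norm (y - x)) * norm (y - x)"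
      by (simp add: power2_eq_square)
    also have "\<dots> \<le> e * norm (y - x)"
    proof (rule mult_right_mono)
      have "\<bar>K\<bar> * norm (y - x) \<le> \<bar>K\<bar> * (e / (\<bar>K\<bar> + 1))"
        using y by (intro mult_left_mono) (simp_all add: d_def)
      also have "\<dots> \<le> e"
        using e by (simp add: field_simps)
      finally show "\<bar>K\<bar> * norm (y - x) \<le> e" .
    qed simp
    finally show ?thesis
      by simp
  qed
  moreover have "0 < d"
    using \<delta> e by (simp add: d_def)
  ultimately show "\<exists>d>0. \<forall>y. norm (y - x) < d \<longrightarrow> norm (f y - f x - L (y - x)) \<le> e * norm (y - x)"
    by blast
qed

lemma convex_on_bounded_sublevel:
  fixes g :: "'a::euclidean_space \<Rightarrow> real"
  assumes g: "convex_on S g" "continuous_on (sphere x r) g" and x: "x \<in> S" and r: "0 < r"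
    and above: "\<And>y. y \<in> sphere x r \<Longrightarrow> g x < g y"
  shows "bounded {y \<in> S. g y \<le> c}"
proof -
  have "sphere x r \<noteq> {}"
    using r by simp
  then obtain u where u: "u \<in> sphere x r" "\<And>y. y \<in> sphere x r \<Longrightarrow> g u \<le> g y"
    using continuous_attains_inf[OF compact_sphere _ g(2)] by blast
  define \<delta> where "\<delta> = g u - g x"
  have \<delta>: "0 < \<delta>"
    using above[OF u(1)] by (simp add: \<delta>_def)
  have far: "dist x y * \<delta> \<le> r * (g y - g x)" if y: "y \<in> S" "r \<le> dist x y" for y
  proof -
    define t where "t = r / dist x y"
    have d: "0 < dist x y"
      using r y(2) by linarith
    then have t: "0 < t" "t \<le> 1"
      using r y(2) by (simp_all add: t_def divide_le_eq_1_pos)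
    define p where "p = (1 - t) *\<^sub>R x + t *\<^sub>R y"
    have "x - p = t *\<^sub>R (x - y)"
      by (simp add: p_def algebra_simps)
    then have "dist x p = r"
      using d r by (simp add: dist_norm t_def)
    then have "g u \<le> g p"
      using u(2) by simp
    also have "g p \<le> (1 - t) * g x + t * g y"
      using convex_onD[OF g(1)] t x y(1) by (simp add: p_def)
    finally have "\<delta> \<le> t * (g y - g x)"
      by (simp add: \<delta>_def algebra_simps)
    then have "dist x y * \<delta> \<le> dist x y * (t * (g y - g x))"
      by (intro mult_left_mono) auto
    also have "\<dots> = r * (g y - g x)"
      using r y(2) by (simp add: t_def)
    finally show ?thesis .
  qed
  have "{y \<in> S. g y \<le> c} \<subseteq> cball x (max r (r * (c - g x) / \<delta>))"
  proof
    fix y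
    assume y: "y \<in> {y \<in> S. g y \<le> c}"
    show "y \<in> cball x (max r (r * (c - g x) / \<delta>))"
    proof (cases "r \<le> dist x y")
      case True
      have "r * (g y - g x) \<le> r * (c - g x)"
        using y r by (intro mult_left_mono) auto
      then have "dist x y * \<delta> \<le> r * (c - g x)"
        using far[of y] True y by simp
      then have "dist x y \<le> r * (c - g x) / \<delta>"
        using \<delta> by (simp add: pos_le_divide_eq)
      then show ?thesis
        by simp
    qed simp
  qed
  then show ?thesis
    by (rule bounded_subset[OF bounded_cball])
qed

lemma compact_mono_family_Inter_nonempty:
  fixes L :: "real \<Rightarrow> 'a::heine_borel set"
  assumes compact: "\<And>c. m < c \<Longrightarrow> compact (L c)" and nonempty: "\<And>c. m < c \<Longrightarrow> L c \<noteq> {}"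
    and mono: "\<And>c c'. c \<le> c' \<Longrightarrow> L c \<subseteq> L c'"
  obtains x where "\<And>c. m < c \<Longrightarrow> x \<in> L c"
proof -
  have "(\<Inter>n. L (m + 1 / Suc n)) \<noteq> {}"
  proof (rule compact_nest)
    show "compact (L (m + 1 / Suc n))" for n
      by (rule compact) simp
    show "L (m + 1 / Suc n) \<noteq> {}" for n
      by (rule nonempty) simp
    show "L (m + 1 / Suc n) \<subseteq> L (m + 1 / Suc k)" if "k \<le> n" for k n
      using that by (intro mono add_left_mono divide_left_mono) auto
  qed
  then obtain x where x: "\<And>n. x \<in> L (m + 1 / Suc n)"
    by blast
  have "x \<in> L c" if c: "m < c" for c
  proof -
    obtain n where "inverse (Suc n) < c - m"
      using reals_Archimedean[of "c - m"] c by auto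
    then have "L (m + 1 / Suc n) \<subseteq> L c"
      by (intro mono) (simp add: inverse_eq_divide)
    then show ?thesis
      using x[of n] by blast
  qed
  then show thesis
    by (rule that)
qed

locale exp_family =
  fixes \<nu> :: "'x measure" and T :: "'x \<Rightarrow> 'p::euclidean_space"
  assumes regular_minimal: "regular_minimal_expfam \<nu> T"
begin

abbreviation \<Theta> :: "'p set" where "\<Theta> \<equiv> nat_param_space \<nu> T"
abbreviation A :: "'p \<Rightarrow> real" where "A \<equiv> log_partition \<nu> T"
abbreviation Z :: "'p \<Rightarrow> real" where "Z \<theta> \<equiv> \<integral>x. exp (\<theta> \<bullet> T x) \<partial>\<nu>"
abbreviation mean_at :: "'p \<Rightarrow> 'p \<Rightarrow> bool"
  where "mean_at \<mu> \<theta> \<equiv> (A has_derivative (\<lambda>h. \<mu> \<bullet> h)) (at \<theta>)"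

lemma measurable_T [measurable]: "T \<in> borel_measurable \<nu>"
  using regular_minimal by (simp add: regular_minimal_expfam_def)

lemma open_nat_param_space: "open \<Theta>"
  using regular_minimal by (simp add: regular_minimal_expfam_def)

lemma affine_relation_trivial: "(AE x in \<nu>. a \<bullet> T x = c) \<Longrightarrow> a = 0"
  using regular_minimal by (auto simp: regular_minimal_expfam_def)

lemma integrable_exp_inner: "\<theta> \<in> \<Theta> \<Longrightarrow> integrable \<nu> (\<lambda>x. exp (\<theta> \<bullet> T x))"
  by (simp add: nat_param_space_def)

lemma not_AE_False: "\<not> (AE x in \<nu>. False)"
proof
  assume "AE x in \<nu>. False"
  then have "AE x in \<nu>. b \<bullet> T x = 0" for b :: 'p
    by (rule eventually_mono) simp
  then have "b = 0" if "b \<in> Basis" for b :: 'p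
    by (rule affine_relation_trivial)
  then show False
    using nonempty_Basis by fastforce
qed

lemma partition_pos: "\<theta> \<in> \<Theta> \<Longrightarrow> 0 < Z \<theta>"
proof -
  assume \<theta>: "\<theta> \<in> \<Theta>"
  have "Z \<theta> \<noteq> 0"
  proof
    assume "Z \<theta> = 0"
    then have "AE x in \<nu>. exp (\<theta> \<bullet> T x) = 0"
      using integral_nonneg_eq_0_iff_AE[OF integrable_exp_inner[OF \<theta>]] by simp
    then have "AE x in \<nu>. False"
      by simp
    then show False
      using not_AE_False by simp
  qed
  moreover have "0 \<le> Z \<theta>"
    by (rule integral_nonneg_AE) simp
  ultimately show ?thesis
    by linarith
qed

lemma exp_log_partition: "\<theta> \<in> \<Theta> \<Longrightarrow> exp (A \<theta>) = Z \<theta>"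
  using partition_pos by (simp add: log_partition_def)

lemma convex_nat_param_space: "convex \<Theta>"
proof (rule convexI)
  fix a b :: 'p and u v :: real
  assume a: "a \<in> \<Theta>" and b: "b \<in> \<Theta>" and uv: "0 \<le> u" "0 \<le> v" "u + v = 1"
  have "exp ((u *\<^sub>R a + v *\<^sub>R b) \<bullet> T x) \<le> exp (a \<bullet> T x) + exp (b \<bullet> T x)" for x
  proof -
    have "exp ((u *\<^sub>R a + v *\<^sub>R b) \<bullet> T x) \<le> u * exp (a \<bullet> T x) + v * exp (b \<bullet> T x)"
      using convex_onD[OF exp_convex, of v "a \<bullet> T x" "b \<bullet> T x"] uv
      by (simp add: inner_add_left eq_diff_eq[of u, symmetric] mult.commute)
    also have "\<dots> \<le> exp (a \<bullet> T x) + exp (b \<bullet> T x)"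
      using uv by (intro add_mono) (auto intro!: mult_left_le_one_le)
    finally show ?thesis .
  qed
  then have "integrable \<nu> (\<lambda>x. exp ((u *\<^sub>R a + v *\<^sub>R b) \<bullet> T x))"
    by (intro Bochner_Integration.integrable_bound[OF
          Bochner_Integration.integrable_add[OF integrable_exp_inner[OF a] integrable_exp_inner[OF b]]])
      auto
  then show "u *\<^sub>R a + v *\<^sub>R b \<in> \<Theta>"
    by (simp add: nat_param_space_def)
qed

lemma convex_on_log_partition: "convex_on \<Theta> A"
proof (rule convex_onI[OF _ convex_nat_param_space])
  fix t :: real and a b :: 'p
  assume t: "0 < t" "t < 1" and a: "a \<in> \<Theta>" and b: "b \<in> \<Theta>"
  define c where "c = (1 - t) *\<^sub>R a + t *\<^sub>R b"
  define K where "K = (1 - t) * A a + t * A b"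
  have c: "c \<in> \<Theta>"
    using convexD_alt[OF convex_nat_param_space a b, of t] t by (simp add: c_def)
  have pointwise: "exp (c \<bullet> T x) * exp (- K)
      \<le> (1 - t) * (exp (a \<bullet> T x) / Z a) + t * (exp (b \<bullet> T x) / Z b)" for x
  proof -
    have "exp (c \<bullet> T x) * exp (- K) = exp ((1 - t) * (a \<bullet> T x - A a) + t * (b \<bullet> T x - A b))"
      by (simp add: c_def K_def inner_add_left algebra_simps flip: exp_add)
    also have "\<dots> \<le> (1 - t) * exp (a \<bullet> T x - A a) + t * exp (b \<bullet> T x - A b)"
      using convex_onD[OF exp_convex, of t] t by simp
    also have "\<dots> = (1 - t) * (exp (a \<bullet> T x) / Z a) + t * (exp (b \<bullet> T x) / Z b)"
      using exp_log_partition[OF a] exp_log_partition[OF b] by (simp add: exp_diff)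
    finally show ?thesis .
  qed
  have "Z c * exp (- K) = (\<integral>x. exp (c \<bullet> T x) * exp (- K) \<partial>\<nu>)"
    by simp
  also have "\<dots> \<le> (\<integral>x. (1 - t) * (exp (a \<bullet> T x) / Z a) + t * (exp (b \<bullet> T x) / Z b) \<partial>\<nu>)"
    using pointwise integrable_exp_inner[OF a] integrable_exp_inner[OF b] integrable_exp_inner[OF c]
    by (intro integral_mono) auto
  also have "\<dots> = 1"
    using integrable_exp_inner[OF a] integrable_exp_inner[OF b] partition_pos[OF a] partition_pos[OF b]
    by simp
  finally have "Z c \<le> exp K"
    by (simp add: exp_minus field_simps)
  then have "A c \<le> K"
    using exp_log_partition[OF c] by (metis exp_le_cancel_iff)
  then show "A ((1 - t) *\<^sub>R a + t *\<^sub>R b) \<le> (1 - t) * A a + t * A b"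
    by (simp add: c_def K_def)
qed

lemma continuous_on_log_partition: "continuous_on \<Theta> A"
  by (rule convex_on_continuous[OF open_nat_param_space convex_on_log_partition])

text \<open>With \<open>f = exp ((a \<bullet> T - A a) / 2)\<close> and \<open>g = exp ((b \<bullet> T - A b) / 2)\<close> and \<open>c\<close> the
  midpoint, \<open>\<integral>(f - g)\<^sup>2 = 2 - 2 exp (A c - (A a + A b) / 2)\<close>; equality in the convexity
  inequality would force \<open>f = g\<close> a.e., an affine relation among the components of \<open>T\<close>.\<close>

lemma log_partition_midpoint_less:
  assumes a: "a \<in> \<Theta>" and b: "b \<in> \<Theta>" and ab: "a \<noteq> b"
  shows "A ((1/2) *\<^sub>R a + (1/2) *\<^sub>R b) < (A a + A b) / 2"
proof (rule ccontr)
  define c where "c = (1/2) *\<^sub>R a + (1/2) *\<^sub>R b"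
  define K where "K = (A a + A b) / 2"
  define f where "f x = exp ((a \<bullet> T x - A a) / 2)" for x
  define g where "g x = exp ((b \<bullet> T x - A b) / 2)" for x
  assume "\<not> A ((1/2) *\<^sub>R a + (1/2) *\<^sub>R b) < (A a + A b) / 2"
  then have cK: "K \<le> A c"
    by (simp add: c_def K_def)
  have c: "c \<in> \<Theta>"
    using convexD[OF convex_nat_param_space a b, of "1/2" "1/2"] by (simp add: c_def)
  have fg_sq: "(f x - g x)\<^sup>2 = exp (a \<bullet> T x) / Z a + exp (b \<bullet> T x) / Z b - 2 * (exp (c \<bullet> T x) * exp (- K))"
    for x
  proof -
    have "f x ^ 2 = exp (a \<bullet> T x) / Z a" "g x ^ 2 = exp (b \<bullet> T x) / Z b"
      using exp_log_partition[OF a] exp_log_partition[OF b]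
      by (simp_all add: f_def g_def power2_eq_square exp_diff flip: exp_add)
    moreover have "f x * g x = exp (c \<bullet> T x) * exp (- K)"
      by (simp add: f_def g_def c_def K_def inner_add_left field_simps flip: exp_add)
    ultimately show ?thesis
      by (simp add: power2_diff)
  qed
  have int: "integrable \<nu> (\<lambda>x. (f x - g x)\<^sup>2)"
    unfolding fg_sq using integrable_exp_inner[OF a] integrable_exp_inner[OF b] integrable_exp_inner[OF c]
    by simp
  have "(\<integral>x. (f x - g x)\<^sup>2 \<partial>\<nu>) = 2 - 2 * (Z c * exp (- K))"
    unfolding fg_sq using integrable_exp_inner[OF a] integrable_exp_inner[OF b] integrable_exp_inner[OF c]
      partition_pos[OF a] partition_pos[OF b]
    by simp
  also have "\<dots> \<le> 0"
  proof -
    have "exp K \<le> Z c"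
      using cK exp_log_partition[OF c] by (metis exp_le_cancel_iff)
    then show ?thesis
      by (simp add: exp_minus field_simps)
  qed
  finally have "(\<integral>x. (f x - g x)\<^sup>2 \<partial>\<nu>) \<le> 0" .
  moreover have "0 \<le> (\<integral>x. (f x - g x)\<^sup>2 \<partial>\<nu>)"
    by (rule integral_nonneg_AE) simp
  ultimately have "AE x in \<nu>. f x = g x"
    using integral_nonneg_eq_0_iff_AE[OF int] by simp
  then have "AE x in \<nu>. (a - b) \<bullet> T x = A a - A b"
    by (rule eventually_mono) (simp add: f_def g_def inner_diff_left)
  then have "a - b = 0"
    by (rule affine_relation_trivial)
  with ab show False
    by simp
qed

lemma integrable_exp_norm:
  assumes \<theta>: "\<theta> \<in> \<Theta>"
  obtains e where "0 < e" "cball \<theta> e \<subseteq> \<Theta>"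
    "integrable \<nu> (\<lambda>x. exp (\<theta> \<bullet> T x + e * norm (T x)))"
proof -
  obtain r where r: "0 < r" "cball \<theta> r \<subseteq> \<Theta>"
    using open_contains_cball open_nat_param_space \<theta> by blast
  define e where "e = r / DIM('p)"
  have e: "0 < e" "e \<le> r"
    using r by (simp_all add: e_def divide_le_eq)
  define S where "S x = (\<Sum>i\<in>Basis. exp ((\<theta> + r *\<^sub>R i) \<bullet> T x) + exp ((\<theta> - r *\<^sub>R i) \<bullet> T x))" for x
  have "integrable \<nu> (\<lambda>x. exp (\<theta> \<bullet> T x + e * norm (T x)))"
  proof (rule Bochner_Integration.integrable_bound)
    have "\<theta> + r *\<^sub>R i \<in> \<Theta>" "\<theta> - r *\<^sub>R i \<in> \<Theta>" if "i \<in> Basis" for i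
      using that r by (auto simp: dist_norm intro!: subsetD[OF r(2)])
    then show "integrable \<nu> S"
      unfolding S_def by (intro Bochner_Integration.integrable_sum Bochner_Integration.integrable_add
          integrable_exp_inner)
    show "(\<lambda>x. exp (\<theta> \<bullet> T x + e * norm (T x))) \<in> borel_measurable \<nu>"
      by measurable
    have "exp (\<theta> \<bullet> T x + e * norm (T x)) \<le> S x" for x
    proof -
      have "exp (\<theta> \<bullet> T x + e * norm (T x))
          \<le> exp (\<theta> \<bullet> T x) * (\<Sum>i\<in>Basis. exp (r * (i \<bullet> T x)) + exp (- r * (i \<bullet> T x)))"
        unfolding exp_add using exp_norm_le_sum_Basis[of r "T x"] r by (simp add: e_def)
      also have "\<dots> = S x"
        unfolding S_def sum_distrib_left
        by (intro sum.cong refl) (simp add: inner_add_left inner_diff_left distrib_left flip: exp_add)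
      finally show ?thesis .
    qed
    then show "AE x in \<nu>. norm (exp (\<theta> \<bullet> T x + e * norm (T x))) \<le> norm (S x)"
      by (intro AE_I2) (simp add: order_trans[OF _ abs_ge_self])
  qed
  moreover have "cball \<theta> e \<subseteq> \<Theta>"
    using subset_cball[OF e(2)] r(2) by blast
  ultimately show thesis
    using that e(1) by blast
qed

lemma integrable_first_moment:
  assumes e: "0 < e" and G: "integrable \<nu> (\<lambda>x. exp (\<theta> \<bullet> T x + e * norm (T x)))"
  shows "integrable \<nu> (\<lambda>x. exp (\<theta> \<bullet> T x) *\<^sub>R T x)"
proof (rule Bochner_Integration.integrable_bound)
  show "integrable \<nu> (\<lambda>x. exp (\<theta> \<bullet> T x + e * norm (T x)) / e)"
    using G by simp
  have "norm (T x) \<le> exp (e * norm (T x)) / e" for x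
  proof -
    have "e * norm (T x) \<le> exp (e * norm (T x))"
      using exp_ge_add_one_self[of "e * norm (T x)"] by linarith
    then show ?thesis
      using e by (simp add: field_simps)
  qed
  then show "AE x in \<nu>. norm (exp (\<theta> \<bullet> T x) *\<^sub>R T x) \<le> norm (exp (\<theta> \<bullet> T x + e * norm (T x)) / e)"
    using e by (intro AE_I2) (simp add: exp_add mult_left_mono divide_simps)
qed simp

lemma log_partition_quadratic_upper:
  assumes \<theta>: "\<theta> \<in> \<Theta>" and e: "0 < e" "cball \<theta> e \<subseteq> \<Theta>"
    and G: "integrable \<nu> (\<lambda>x. exp (\<theta> \<bullet> T x + e * norm (T x)))" and h: "norm h \<le> e / 2"
  shows "A (\<theta> + h) - A \<theta> - h \<bullet> (\<integral>x. exp (\<theta> \<bullet> T x) *\<^sub>R T x \<partial>\<nu>) / Z \<theta>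
    \<le> 8 / e\<^sup>2 * (\<integral>x. exp (\<theta> \<bullet> T x + e * norm (T x)) \<partial>\<nu>) / Z \<theta> * (norm h)\<^sup>2"
proof -
  define M where "M = (\<integral>x. exp (\<theta> \<bullet> T x) *\<^sub>R T x \<partial>\<nu>)"
  define I where "I = (\<integral>x. exp (\<theta> \<bullet> T x + e * norm (T x)) \<partial>\<nu>)"
  have moment: "integrable \<nu> (\<lambda>x. exp (\<theta> \<bullet> T x) *\<^sub>R T x)"
    using integrable_first_moment[OF e(1) G] .
  have \<theta>h: "\<theta> + h \<in> \<Theta>"
    using e h by (auto simp: dist_norm)
  have pointwise: "exp ((\<theta> + h) \<bullet> T x)
      \<le> exp (\<theta> \<bullet> T x) + h \<bullet> (exp (\<theta> \<bullet> T x) *\<^sub>R T x)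
        + 8 / e\<^sup>2 * (norm h)\<^sup>2 * exp (\<theta> \<bullet> T x + e * norm (T x))" for x
  proof -
    have "exp (h \<bullet> T x) \<le> 1 + h \<bullet> T x + (norm h)\<^sup>2 * (8 / e\<^sup>2) * exp (e * norm (T x))"
      using h e(1) by (intro exp_le_quadratic_remainder Cauchy_Schwarz_ineq2) auto
    then have "exp (\<theta> \<bullet> T x) * exp (h \<bullet> T x)
        \<le> exp (\<theta> \<bullet> T x) * (1 + h \<bullet> T x + (norm h)\<^sup>2 * (8 / e\<^sup>2) * exp (e * norm (T x)))"
      by (rule mult_left_mono) simp
    then show ?thesis
      by (simp add: inner_add_left exp_add algebra_simps)
  qed
  have "Z (\<theta> + h) \<le> (\<integral>x. exp (\<theta> \<bullet> T x) + h \<bullet> (exp (\<theta> \<bullet> T x) *\<^sub>R T x)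
      + 8 / e\<^sup>2 * (norm h)\<^sup>2 * exp (\<theta> \<bullet> T x + e * norm (T x)) \<partial>\<nu>)"
    using pointwise
    by (intro integral_mono Bochner_Integration.integrable_add integrable_inner_right
        integrable_mult_right integrable_exp_inner \<theta> \<theta>h moment G)
  also have "\<dots> = Z \<theta> + h \<bullet> M + 8 / e\<^sup>2 * (norm h)\<^sup>2 * I"
    using integrable_exp_inner[OF \<theta>] moment G by (simp add: M_def I_def del: inner_scaleR_right)
  finally have Z_le: "Z (\<theta> + h) - Z \<theta> \<le> h \<bullet> M + 8 / e\<^sup>2 * (norm h)\<^sup>2 * I"
    by simp
  have "A (\<theta> + h) - A \<theta> \<le> (Z (\<theta> + h) - Z \<theta>) / Z \<theta>"
    using ln_diff_le[OF partition_pos[OF \<theta>h] partition_pos[OF \<theta>]] by (simp add: log_partition_def)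
  also have "\<dots> \<le> (h \<bullet> M + 8 / e\<^sup>2 * (norm h)\<^sup>2 * I) / Z \<theta>"
    using Z_le partition_pos[OF \<theta>] by (intro divide_right_mono) auto
  also have "\<dots> = h \<bullet> M / Z \<theta> + 8 / e\<^sup>2 * I / Z \<theta> * (norm h)\<^sup>2"
    by (simp add: add_divide_distrib)
  finally show ?thesis
    by (simp add: M_def I_def)
qed

lemma log_partition_differentiable:
  assumes \<theta>: "\<theta> \<in> \<Theta>"
  obtains \<mu> where "mean_at \<mu> \<theta>"
proof -
  obtain e where e: "0 < e" "cball \<theta> e \<subseteq> \<Theta>"
    and G: "integrable \<nu> (\<lambda>x. exp (\<theta> \<bullet> T x + e * norm (T x)))"
    using integrable_exp_norm \<theta> by blast
  define \<mu> where "\<mu> = (\<integral>x. exp (\<theta> \<bullet> T x) *\<^sub>R T x \<partial>\<nu>) /\<^sub>R Z \<theta>"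
  define K where "K = 8 / e\<^sup>2 * (\<integral>x. exp (\<theta> \<bullet> T x + e * norm (T x)) \<partial>\<nu>) / Z \<theta>"
  have upper: "A (\<theta> + h) - A \<theta> - \<mu> \<bullet> h \<le> K * (norm h)\<^sup>2" if "norm h \<le> e / 2" for h
    using log_partition_quadratic_upper[OF \<theta> e G that]
    by (simp add: \<mu>_def K_def inner_commute[of _ h] divide_inverse mult.commute)
  have "\<bar>A (\<theta> + h) - A \<theta> - \<mu> \<bullet> h\<bar> \<le> K * (norm h)\<^sup>2" if h: "norm h \<le> e / 2" for h
  proof -
    have "\<theta> + h \<in> \<Theta>" "\<theta> - h \<in> \<Theta>"
      using e h by (auto simp: dist_norm)
    then have "A ((1 - 1/2) *\<^sub>R (\<theta> + h) + (1/2) *\<^sub>R (\<theta> - h)) \<le> (1 - 1/2) * A (\<theta> + h) + (1/2) * A (\<theta> - h)"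
      by (intro convex_onD[OF convex_on_log_partition]) auto
    moreover have "(1 - 1/2) *\<^sub>R (\<theta> + h) + (1/2) *\<^sub>R (\<theta> - h) = \<theta>"
      by (simp add: algebra_simps flip: scaleR_add_left)
    moreover have "A (\<theta> - h) - A \<theta> + \<mu> \<bullet> h \<le> K * (norm h)\<^sup>2"
      using upper[of "- h"] h by simp
    ultimately show ?thesis
      using upper[OF h] by (simp add: abs_le_iff)
  qed
  then have "mean_at \<mu> \<theta>"
    using e(1) by (intro has_derivative_of_quadratic_error[of _ "e / 2"] bounded_linear_inner_right) auto
  then show thesis
    by (rule that)
qed

lemma log_partition_tangent_le:
  "\<theta>0 \<in> \<Theta> \<Longrightarrow> mean_at \<mu> \<theta>0 \<Longrightarrow> \<theta> \<in> \<Theta> \<Longrightarrow> A \<theta>0 + \<mu> \<bullet> (\<theta> - \<theta>0) \<le> A \<theta>"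
  by (rule convex_on_tangent_le[OF convex_on_log_partition])

lemma KL_ge_bregman:
  "\<theta> \<in> \<Theta> \<Longrightarrow> ereal (A \<theta>h - A \<theta> - \<mu> \<bullet> (\<theta>h - \<theta>)) \<le> KL \<nu> T \<mu> \<theta>h"
proof -
  assume "\<theta> \<in> \<Theta>"
  then have "ereal (\<mu> \<bullet> \<theta> - A \<theta>) \<le> fenchel_conj \<nu> T \<mu>"
    unfolding fenchel_conj_def by (rule SUP_upper)
  then have "ereal (- (\<mu> \<bullet> \<theta>h)) + ereal (\<mu> \<bullet> \<theta> - A \<theta>) + ereal (A \<theta>h) \<le> KL \<nu> T \<mu> \<theta>h"
    unfolding KL_def by (intro add_mono order_refl)
  then show ?thesis
    by (simp add: inner_diff_right algebra_simps)
qed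

lemma KL_eq_bregman:
  assumes \<theta>: "\<theta> \<in> \<Theta>" and \<mu>: "mean_at \<mu> \<theta>"
  shows "KL \<nu> T \<mu> \<theta>h = ereal (A \<theta>h - A \<theta> - \<mu> \<bullet> (\<theta>h - \<theta>))"
proof -
  have "fenchel_conj \<nu> T \<mu> = ereal (\<mu> \<bullet> \<theta> - A \<theta>)"
    unfolding fenchel_conj_def
  proof (rule antisym)
    show "(SUP \<theta>'\<in>\<Theta>. ereal (\<mu> \<bullet> \<theta>' - A \<theta>')) \<le> ereal (\<mu> \<bullet> \<theta> - A \<theta>)"
    proof (rule SUP_least)
      fix \<theta>'
      assume "\<theta>' \<in> \<Theta>"
      then have "A \<theta> + \<mu> \<bullet> (\<theta>' - \<theta>) \<le> A \<theta>'"
        by (rule log_partition_tangent_le[OF \<theta> \<mu>])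
      then show "ereal (\<mu> \<bullet> \<theta>' - A \<theta>') \<le> ereal (\<mu> \<bullet> \<theta> - A \<theta>)"
        unfolding inner_diff_right by simp
    qed
    show "ereal (\<mu> \<bullet> \<theta> - A \<theta>) \<le> (SUP \<theta>'\<in>\<Theta>. ereal (\<mu> \<bullet> \<theta>' - A \<theta>'))"
      using \<theta> by (rule SUP_upper)
  qed
  then show ?thesis
    by (simp add: KL_def inner_diff_right)
qed

lemma limit_in_nat_param_space:
  assumes x: "\<And>n. x n \<in> \<Theta>" "x \<longlonglongrightarrow> l" and bounded: "\<forall>\<^sub>F n in sequentially. Z (x n) \<le> B"
  shows "l \<in> \<Theta>"
proof -
  have "(\<integral>\<^sup>+ y. exp (l \<bullet> T y) \<partial>\<nu>) = (\<integral>\<^sup>+ y. liminf (\<lambda>n. ennreal (exp (x n \<bullet> T y))) \<partial>\<nu>)"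
  proof (intro nn_integral_cong)
    fix y
    have "(\<lambda>n. ennreal (exp (x n \<bullet> T y))) \<longlonglongrightarrow> ennreal (exp (l \<bullet> T y))"
      using x(2) by (intro tendsto_intros)
    then show "ennreal (exp (l \<bullet> T y)) = liminf (\<lambda>n. ennreal (exp (x n \<bullet> T y)))"
      by (rule lim_imp_Liminf[OF sequentially_bot, symmetric])
  qed
  also have "\<dots> \<le> liminf (\<lambda>n. \<integral>\<^sup>+ y. exp (x n \<bullet> T y) \<partial>\<nu>)"
    by (rule nn_integral_liminf) measurable
  also have "\<dots> \<le> limsup (\<lambda>n. \<integral>\<^sup>+ y. exp (x n \<bullet> T y) \<partial>\<nu>)"
    by (rule Liminf_le_Limsup) simp
  also have "\<dots> \<le> ennreal B"
    using bounded
  proof (intro Limsup_bounded, eventually_elim)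
    case (elim n)
    then show ?case
      using integrable_exp_inner[OF x(1)] by (simp add: nn_integral_eq_integral ennreal_leI)
  qed
  finally have "(\<integral>\<^sup>+ y. exp (l \<bullet> T y) \<partial>\<nu>) < top"
    using ennreal_less_top[of B] by (rule le_less_trans)
  then have "integrable \<nu> (\<lambda>y. exp (l \<bullet> T y))"
    by (intro integrableI_bounded) simp_all
  then show ?thesis
    by (simp add: nat_param_space_def)
qed

lemma closed_log_partition_sublevel: "closed {\<theta> \<in> \<Theta>. A \<theta> - \<mu> \<bullet> \<theta> \<le> c}"
  unfolding closed_sequential_limits
proof (intro allI impI, elim conjE)
  fix x l
  assume "\<forall>n. x n \<in> {\<theta> \<in> \<Theta>. A \<theta> - \<mu> \<bullet> \<theta> \<le> c}" and l: "x \<longlonglongrightarrow> l"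
  then have x\<Theta>: "\<And>n. x n \<in> \<Theta>" and x_le: "\<And>n. A (x n) - \<mu> \<bullet> x n \<le> c"
    by auto
  have "(\<lambda>n. \<mu> \<bullet> x n) \<longlonglongrightarrow> \<mu> \<bullet> l"
    using l by (intro tendsto_intros)
  then have "\<forall>\<^sub>F n in sequentially. \<mu> \<bullet> x n < \<mu> \<bullet> l + 1"
    by (rule order_tendstoD) simp
  then have "\<forall>\<^sub>F n in sequentially. Z (x n) \<le> exp (c + \<mu> \<bullet> l + 1)"
  proof eventually_elim
    case (elim n)
    have "Z (x n) = exp (A (x n))"
      using exp_log_partition[OF x\<Theta>] by simp
    also have "\<dots> \<le> exp (c + \<mu> \<bullet> l + 1)"
      using elim x_le[of n] by simp
    finally show ?case .
  qed
  with x\<Theta> l have l\<Theta>: "l \<in> \<Theta>"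
    by (rule limit_in_nat_param_space)
  have "isCont A l"
    using continuous_on_log_partition open_nat_param_space l\<Theta> continuous_on_eq_continuous_at by blast
  then have "(\<lambda>n. A (x n) - \<mu> \<bullet> x n) \<longlonglongrightarrow> A l - \<mu> \<bullet> l"
    using l by (intro tendsto_diff tendsto_inner tendsto_const isCont_tendsto_compose[of l A])
  then have "A l - \<mu> \<bullet> l \<le> c"
    by (rule tendsto_upperbound) (simp_all add: x_le)
  with l\<Theta> show "l \<in> {\<theta> \<in> \<Theta>. A \<theta> - \<mu> \<bullet> \<theta> \<le> c}"
    by simp
qed

lemma compact_log_partition_sublevel:
  assumes \<theta>1: "\<theta>1 \<in> \<Theta>" "mean_at \<mu> \<theta>1"
  shows "compact {\<theta> \<in> \<Theta>. A \<theta> - \<mu> \<bullet> \<theta> \<le> c}"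
proof -
  define g where "g \<theta> = A \<theta> - \<mu> \<bullet> \<theta>" for \<theta>
  obtain r where r: "0 < r" "cball \<theta>1 r \<subseteq> \<Theta>"
    using open_contains_cball open_nat_param_space \<theta>1(1) by blast
  have "bounded {\<theta> \<in> \<Theta>. g \<theta> \<le> c}"
  proof (rule convex_on_bounded_sublevel[OF _ _ \<theta>1(1) r(1)])
    show "convex_on \<Theta> g"
    proof (rule convex_onI[OF _ convex_nat_param_space])
      fix t :: real and \<theta> \<theta>'
      assume "0 < t" "t < 1" "\<theta> \<in> \<Theta>" "\<theta>' \<in> \<Theta>"
      then show "g ((1 - t) *\<^sub>R \<theta> + t *\<^sub>R \<theta>') \<le> (1 - t) * g \<theta> + t * g \<theta>'"
        using convex_onD[OF convex_on_log_partition, of t \<theta> \<theta>']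
        by (simp add: g_def inner_add_right algebra_simps)
    qed
    show "continuous_on (sphere \<theta>1 r) g"
      using r sphere_cball by (auto simp: g_def intro!: continuous_intros
          continuous_on_subset[OF continuous_on_log_partition])
    show "g \<theta>1 < g y" if y: "y \<in> sphere \<theta>1 r" for y
    proof -
      have y\<Theta>: "y \<in> \<Theta>" and "y \<noteq> \<theta>1"
        using y r sphere_cball by auto
      define m where "m = (1/2) *\<^sub>R \<theta>1 + (1/2) *\<^sub>R y"
      have "m \<in> \<Theta>"
        using convexD[OF convex_nat_param_space \<theta>1(1) y\<Theta>, of "1/2" "1/2"] by (simp add: m_def)
      then have "A \<theta>1 + \<mu> \<bullet> (m - \<theta>1) \<le> A m"
        by (rule log_partition_tangent_le[OF \<theta>1])
      then have "g \<theta>1 \<le> g m"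
        unfolding g_def inner_diff_right by linarith
      moreover have "g m < (g \<theta>1 + g y) / 2"
        using log_partition_midpoint_less[OF \<theta>1(1) y\<Theta>] \<open>y \<noteq> \<theta>1\<close>
        by (simp add: g_def m_def inner_add_right)
      ultimately show ?thesis
        by simp
    qed
  qed
  then show ?thesis
    using closed_log_partition_sublevel by (simp add: compact_eq_bounded_closed g_def)
qed

text \<open>\<open>(\<theta>s, m)\<close> solves the Fenchel dual of (S2) over a set \<open>C\<close> of mean parameters: \<open>m\<close> is the
  least value over \<open>\<theta>\<close> of the supremum over \<open>\<mu> \<in> C\<close> of \<open>A \<theta> + (\<theta>h - \<theta>) \<bullet> \<mu>\<close>, attained at
  \<open>\<theta>s\<close>; the minimum of \<open>KL \<mu> \<theta>h\<close> over \<open>\<mu> \<in> C\<close> turns out to be \<open>A \<theta>h - m\<close>.\<close>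

definition dual_minimizer :: "'p set \<Rightarrow> 'p \<Rightarrow> 'p \<Rightarrow> real \<Rightarrow> bool" where
  "dual_minimizer C \<theta>h \<theta>s m \<longleftrightarrow> \<theta>s \<in> \<Theta> \<and> (\<forall>\<mu>\<in>C. A \<theta>s + (\<theta>h - \<theta>s) \<bullet> \<mu> \<le> m) \<and>
     (\<forall>\<theta>\<in>\<Theta>. \<forall>c. (\<forall>\<mu>\<in>C. A \<theta> + (\<theta>h - \<theta>) \<bullet> \<mu> \<le> c) \<longrightarrow> m \<le> c)"

lemma compact_dual_sublevel:
  assumes "\<mu>1 \<in> C" "\<theta>1 \<in> \<Theta>" "mean_at \<mu>1 \<theta>1"
  shows "compact {\<theta> \<in> \<Theta>. \<forall>\<mu>\<in>C. A \<theta> + (\<theta>h - \<theta>) \<bullet> \<mu> \<le> c}"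
proof -
  have "A \<theta> + (\<theta>h - \<theta>) \<bullet> \<mu> \<le> c \<longleftrightarrow> A \<theta> - \<mu> \<bullet> \<theta> \<le> c - \<mu> \<bullet> \<theta>h" for \<theta> \<mu> :: 'p
    using inner_diff_left[of \<theta>h \<theta> \<mu>] inner_commute[of \<theta>h \<mu>] inner_commute[of \<theta> \<mu>] by linarith
  then have "{\<theta> \<in> \<Theta>. \<forall>\<mu>\<in>C. A \<theta> + (\<theta>h - \<theta>) \<bullet> \<mu> \<le> c}
      = {\<theta> \<in> \<Theta>. A \<theta> - \<mu>1 \<bullet> \<theta> \<le> c - \<mu>1 \<bullet> \<theta>h} \<inter> (\<Inter>\<mu>\<in>C. {\<theta> \<in> \<Theta>. A \<theta> - \<mu> \<bullet> \<theta> \<le> c - \<mu> \<bullet> \<theta>h})"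
    using assms(1) by auto
  also have "compact \<dots>"
    by (intro compact_Int_closed compact_log_partition_sublevel[OF assms(2,3)] closed_INT ballI
        closed_log_partition_sublevel)
  finally show ?thesis .
qed

lemma dual_minimizer_exists:
  assumes \<mu>1: "\<mu>1 \<in> C" "\<theta>1 \<in> \<Theta>" "mean_at \<mu>1 \<theta>1" and \<theta>h: "\<theta>h \<in> \<Theta>"
  obtains \<theta>s m where "dual_minimizer C \<theta>h \<theta>s m"
proof -
  define L where "L c = {\<theta> \<in> \<Theta>. \<forall>\<mu>\<in>C. A \<theta> + (\<theta>h - \<theta>) \<bullet> \<mu> \<le> c}" for c
  define V where "V = {c. L c \<noteq> {}}"
  define m where "m = Inf V"
  have L_mono: "L c \<subseteq> L c'" if "c \<le> c'" for c c'
    unfolding L_def using that by (blast intro: order_trans)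
  have V_lower: "A \<theta>1 + \<mu>1 \<bullet> (\<theta>h - \<theta>1) \<le> c" if c: "c \<in> V" for c
  proof -
    obtain \<theta> where \<theta>: "\<theta> \<in> \<Theta>" "A \<theta> + (\<theta>h - \<theta>) \<bullet> \<mu>1 \<le> c"
      using c \<mu>1(1) by (auto simp: V_def L_def)
    moreover have "A \<theta>1 + \<mu>1 \<bullet> (\<theta> - \<theta>1) \<le> A \<theta>"
      by (rule log_partition_tangent_le[OF \<mu>1(2,3) \<theta>(1)])
    ultimately show ?thesis
      unfolding inner_diff_left inner_diff_right
      using inner_commute[of \<theta>h \<mu>1] inner_commute[of \<theta> \<mu>1] by linarith
  qed
  have "\<theta>h \<in> L (A \<theta>h)"
    using \<theta>h by (simp add: L_def)
  then have V: "A \<theta>h \<in> V" "bdd_below V"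
    by (auto simp: V_def intro: bdd_belowI[OF V_lower])
  have m_le: "m \<le> c" if "\<theta> \<in> L c" for \<theta> c
    unfolding m_def using that V(2) by (intro cInf_lower) (auto simp: V_def)
  have L_nonempty: "L c \<noteq> {}" if "m < c" for c
  proof -
    obtain c' where "c' \<in> V" "c' < c"
      using cInf_less_iff[of V c] V \<open>m < c\<close> by (auto simp: m_def)
    then show ?thesis
      using L_mono[of c' c] by (auto simp: V_def)
  qed
  have L_compact: "compact (L c)" if "m < c" for c
    unfolding L_def by (rule compact_dual_sublevel[OF \<mu>1])
  obtain \<theta>s where \<theta>s: "\<And>c. m < c \<Longrightarrow> \<theta>s \<in> L c"
    using compact_mono_family_Inter_nonempty[of m L, OF L_compact L_nonempty L_mono] by blast
  have "\<theta>s \<in> \<Theta>"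
    using \<theta>s[of "m + 1"] by (simp add: L_def)
  moreover have "A \<theta>s + (\<theta>h - \<theta>s) \<bullet> \<mu> \<le> m" if \<mu>: "\<mu> \<in> C" for \<mu>
  proof (rule dense_ge)
    fix c
    assume "m < c"
    then show "A \<theta>s + (\<theta>h - \<theta>s) \<bullet> \<mu> \<le> c"
      using \<theta>s[of c] \<mu> by (simp add: L_def)
  qed
  moreover have "m \<le> c" if "\<theta> \<in> \<Theta>" "\<forall>\<mu>\<in>C. A \<theta> + (\<theta>h - \<theta>) \<bullet> \<mu> \<le> c" for \<theta> c
    using m_le[of \<theta> c] that by (simp add: L_def)
  ultimately have "dual_minimizer C \<theta>h \<theta>s m"
    by (simp add: dual_minimizer_def)
  then show thesis
    by (rule that)
qed

lemma dual_minimizer_directional_bound: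
  assumes dual: "dual_minimizer C \<theta>h \<theta>s m" and \<mu>0: "mean_at \<mu>0 \<theta>s"
    and shift: "\<forall>\<^sub>F t in at_right 0. \<forall>\<mu>\<in>C. (\<theta>h - (\<theta>s + t *\<^sub>R z)) \<bullet> \<mu> \<le> m - A \<theta>s - t * \<beta>"
  shows "\<beta> \<le> \<mu>0 \<bullet> z"
proof -
  have \<theta>s: "\<theta>s \<in> \<Theta>"
    and least: "\<And>\<theta> c. \<theta> \<in> \<Theta> \<Longrightarrow> \<forall>\<mu>\<in>C. A \<theta> + (\<theta>h - \<theta>) \<bullet> \<mu> \<le> c \<Longrightarrow> m \<le> c"
    using dual by (auto simp: dual_minimizer_def)
  have "\<forall>\<^sub>F t in at_right 0. \<beta> * t \<le> A (\<theta>s + t *\<^sub>R z) - A \<theta>s"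
    using eventually_at_right_add_scaleR_in_open[OF open_nat_param_space \<theta>s, of z] shift
  proof eventually_elim
    case (elim t)
    then have "\<forall>\<mu>\<in>C. A (\<theta>s + t *\<^sub>R z) + (\<theta>h - (\<theta>s + t *\<^sub>R z)) \<bullet> \<mu>
        \<le> A (\<theta>s + t *\<^sub>R z) + (m - A \<theta>s - t * \<beta>)"
      by auto
    with elim(1) have "m \<le> A (\<theta>s + t *\<^sub>R z) + (m - A \<theta>s - t * \<beta>)"
      by (rule least)
    then show ?case
      by (simp add: mult.commute)
  qed
  then show ?thesis
    by (rule has_derivative_directional_lower_bound[OF \<mu>0])
qed

lemma dual_minimizer_mean_mem:
  assumes dual: "dual_minimizer C \<theta>h \<theta>s m" and \<mu>0: "mean_at \<mu>0 \<theta>s"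
    and K: "closed K" "convex K" "C \<subseteq> K"
  shows "\<mu>0 \<in> K"
proof (rule ccontr)
  assume "\<mu>0 \<notin> K"
  then obtain a b where ab: "a \<bullet> \<mu>0 < b" "\<forall>\<mu>\<in>K. b < a \<bullet> \<mu>"
    using separating_hyperplane_closed_point[OF K(2,1)] by blast
  have bound: "A \<theta>s + (\<theta>h - \<theta>s) \<bullet> \<mu> \<le> m" if "\<mu> \<in> C" for \<mu>
    using dual that by (simp add: dual_minimizer_def)
  have "\<forall>\<^sub>F t in at_right 0. \<forall>\<mu>\<in>C. (\<theta>h - (\<theta>s + t *\<^sub>R a)) \<bullet> \<mu> \<le> m - A \<theta>s - t * b"
    using eventually_at_right_less[of 0]
  proof eventually_elim
    case (elim t)
    show ?case
    proof
      fix \<mu>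
      assume \<mu>: "\<mu> \<in> C"
      then have "b < a \<bullet> \<mu>"
        using ab(2) K(3) by blast
      then have "t * b \<le> t * (a \<bullet> \<mu>)"
        using elim by (intro mult_left_mono) auto
      then show "(\<theta>h - (\<theta>s + t *\<^sub>R a)) \<bullet> \<mu> \<le> m - A \<theta>s - t * b"
        using bound[OF \<mu>] by (simp add: inner_diff_left inner_add_left)
    qed
  qed
  then have "b \<le> \<mu>0 \<bullet> a"
    by (rule dual_minimizer_directional_bound[OF dual \<mu>0])
  with ab(1) show False
    by (simp add: inner_commute)
qed

lemma dual_minimizer_mean_value:
  assumes dual: "dual_minimizer C \<theta>h \<theta>s m" and \<mu>0: "mean_at \<mu>0 \<theta>s" "\<mu>0 \<in> C"
  shows "A \<theta>s + (\<theta>h - \<theta>s) \<bullet> \<mu>0 = m"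
proof (rule antisym)
  have bound: "A \<theta>s + (\<theta>h - \<theta>s) \<bullet> \<mu> \<le> m" if "\<mu> \<in> C" for \<mu>
    using dual that by (simp add: dual_minimizer_def)
  then show "A \<theta>s + (\<theta>h - \<theta>s) \<bullet> \<mu>0 \<le> m"
    using \<mu>0(2) .
  have "\<forall>\<^sub>F t in at_right 0. \<forall>\<mu>\<in>C.
      (\<theta>h - (\<theta>s + t *\<^sub>R (\<theta>h - \<theta>s))) \<bullet> \<mu> \<le> m - A \<theta>s - t * (m - A \<theta>s)"
    using eventually_at_right_real[OF zero_less_one]
  proof eventually_elim
    case (elim t)
    show ?case
    proof
      fix \<mu>
      assume "\<mu> \<in> C"
      then have "(1 - t) * ((\<theta>h - \<theta>s) \<bullet> \<mu>) \<le> (1 - t) * (m - A \<theta>s)"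
        using elim bound by (intro mult_left_mono) (auto simp: algebra_simps)
      moreover have "\<theta>h - (\<theta>s + t *\<^sub>R (\<theta>h - \<theta>s)) = (1 - t) *\<^sub>R (\<theta>h - \<theta>s)"
        by (simp add: algebra_simps)
      ultimately show "(\<theta>h - (\<theta>s + t *\<^sub>R (\<theta>h - \<theta>s))) \<bullet> \<mu> \<le> m - A \<theta>s - t * (m - A \<theta>s)"
        by (simp add: algebra_simps)
    qed
  qed
  then have "m - A \<theta>s \<le> \<mu>0 \<bullet> (\<theta>h - \<theta>s)"
    by (rule dual_minimizer_directional_bound[OF dual \<mu>0(1)])
  then show "m \<le> A \<theta>s + (\<theta>h - \<theta>s) \<bullet> \<mu>0"
    by (simp add: inner_commute)
qed

lemma KL_projection_exists_unique:
  assumes K: "closed K" "convex K" and C: "mean_param_space \<nu> T \<inter> K \<noteq> {}" and \<theta>h: "\<theta>h \<in> \<Theta>"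
  defines "C \<equiv> mean_param_space \<nu> T \<inter> K"
  shows "\<exists>!\<mu>. \<mu> \<in> C \<and> (\<forall>\<mu>'\<in>C. KL \<nu> T \<mu> \<theta>h \<le> KL \<nu> T \<mu>' \<theta>h)"
proof -
  obtain \<mu>1 \<theta>1 where "\<mu>1 \<in> C" "\<theta>1 \<in> \<Theta>" "mean_at \<mu>1 \<theta>1"
    using C by (auto simp: C_def mean_param_space_def)
  then obtain \<theta>s m where dual: "dual_minimizer C \<theta>h \<theta>s m"
    using dual_minimizer_exists \<theta>h by blast
  then have \<theta>s: "\<theta>s \<in> \<Theta>" and bound: "\<And>\<mu>. \<mu> \<in> C \<Longrightarrow> A \<theta>s + (\<theta>h - \<theta>s) \<bullet> \<mu> \<le> m"
    by (auto simp: dual_minimizer_def)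
  obtain \<mu>0 where \<mu>0: "mean_at \<mu>0 \<theta>s"
    using log_partition_differentiable[OF \<theta>s] by blast
  have "\<mu>0 \<in> K"
    using dual_minimizer_mean_mem[OF dual \<mu>0 K] by (simp add: C_def)
  then have \<mu>0C: "\<mu>0 \<in> C"
    using \<theta>s \<mu>0 by (auto simp: C_def mean_param_space_def)
  have KL_ge: "ereal (A \<theta>h - m) \<le> KL \<nu> T \<mu> \<theta>h" if "\<mu> \<in> C" for \<mu>
  proof -
    have "A \<theta>h - m \<le> A \<theta>h - A \<theta>s - \<mu> \<bullet> (\<theta>h - \<theta>s)"
      using bound[OF that] by (simp add: inner_commute)
    then show ?thesis
      using KL_ge_bregman[OF \<theta>s, of \<theta>h \<mu>] by (meson ereal_less_eq(3) order_trans)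
  qed
  have KL_\<mu>0: "KL \<nu> T \<mu>0 \<theta>h = ereal (A \<theta>h - m)"
    using KL_eq_bregman[OF \<theta>s \<mu>0] dual_minimizer_mean_value[OF dual \<mu>0 \<mu>0C]
    by (simp add: inner_commute)
  have "\<mu> = \<mu>0" if \<mu>: "\<mu> \<in> C" "KL \<nu> T \<mu> \<theta>h \<le> KL \<nu> T \<mu>0 \<theta>h" for \<mu>
  proof (rule subgradient_eq_derivative[OF open_nat_param_space \<theta>s \<mu>0])
    fix \<theta>
    assume "\<theta> \<in> \<Theta>"
    then have "ereal (A \<theta>h - A \<theta> - \<mu> \<bullet> (\<theta>h - \<theta>)) \<le> KL \<nu> T \<mu> \<theta>h"
      by (rule KL_ge_bregman)
    also have "\<dots> \<le> ereal (A \<theta>h - m)"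
      using \<mu>(2) KL_\<mu>0 by simp
    finally have "A \<theta>h - A \<theta> - \<mu> \<bullet> (\<theta>h - \<theta>) \<le> A \<theta>h - m"
      by simp
    then show "A \<theta>s + \<mu> \<bullet> (\<theta> - \<theta>s) \<le> A \<theta>"
      using bound[OF \<mu>(1)] by (simp add: inner_diff_right inner_commute)
  qed
  with \<mu>0C KL_ge KL_\<mu>0 show ?thesis
    by (metis order_trans)
qed

lemma log_partition_minimizer_unique:
  assumes D: "convex D" "D \<subseteq> \<Theta>"
    and \<theta>1: "\<theta>1 \<in> D" "\<forall>\<theta>\<in>D. A \<theta>1 - t \<bullet> \<theta>1 \<le> A \<theta> - t \<bullet> \<theta>"
    and \<theta>2: "\<theta>2 \<in> D" "\<forall>\<theta>\<in>D. A \<theta>2 - t \<bullet> \<theta>2 \<le> A \<theta> - t \<bullet> \<theta>"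
  shows "\<theta>1 = \<theta>2"
proof (rule ccontr)
  assume "\<theta>1 \<noteq> \<theta>2"
  then have "A ((1/2) *\<^sub>R \<theta>1 + (1/2) *\<^sub>R \<theta>2) < (A \<theta>1 + A \<theta>2) / 2"
    using D(2) \<theta>1(1) \<theta>2(1) by (intro log_partition_midpoint_less) auto
  moreover have "(1/2) *\<^sub>R \<theta>1 + (1/2) *\<^sub>R \<theta>2 \<in> D"
    using convexD[OF D(1) \<theta>1(1) \<theta>2(1), of "1/2" "1/2"] by simp
  then have "A \<theta>1 - t \<bullet> \<theta>1 \<le> A ((1/2) *\<^sub>R \<theta>1 + (1/2) *\<^sub>R \<theta>2) - t \<bullet> ((1/2) *\<^sub>R \<theta>1 + (1/2) *\<^sub>R \<theta>2)"
    using \<theta>1(2) by blast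
  moreover have "A \<theta>1 - t \<bullet> \<theta>1 \<le> A \<theta>2 - t \<bullet> \<theta>2" "A \<theta>2 - t \<bullet> \<theta>2 \<le> A \<theta>1 - t \<bullet> \<theta>1"
    using \<theta>1 \<theta>2 by auto
  ultimately show False
    by (simp add: inner_add_right)
qed

end

lemma C_v_eq_Int: "C_v \<nu> T Thv' = nat_param_space \<nu> T \<inter> (UNIV \<times> Thv')"
  by (auto simp: C_v_def)

lemma C_u_eq_Int_closure:
  assumes "closedin (top_of_set (fst ` mean_param_space \<nu> T)) Mu'"
  shows "C_u \<nu> T Mu' = mean_param_space \<nu> T \<inter> (closure Mu' \<times> UNIV)"
proof -
  obtain F where F: "closed F" "Mu' = fst ` mean_param_space \<nu> T \<inter> F"
    using assms closedin_closed by blast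
  then have "closure Mu' \<subseteq> F"
    by (simp add: closure_minimal)
  then show ?thesis
    using F(2) closure_subset[of Mu'] by (auto simp: C_u_def)
qed

theorem proposition4p3:
  fixes \<nu> :: "'x measure"
    and T :: "'x \<Rightarrow> 'a::euclidean_space \<times> 'b::euclidean_space"
    and Mu' :: "'a set" and Thv' :: "'b set"
    and t \<theta>h :: "'a \<times> 'b"
  assumes fam: "regular_minimal_expfam \<nu> T"
    and Mu'_sub: "Mu' \<subseteq> fst ` mean_param_space \<nu> T"
    and Mu'_convex: "convex Mu'"
    and Mu'_closed: "closedin (top_of_set (fst ` mean_param_space \<nu> T)) Mu'"
    and Mu'_ne: "Mu' \<noteq> {}"
    and Thv'_sub: "Thv' \<subseteq> snd ` nat_param_space \<nu> T"
    and Thv'_convex: "convex Thv'"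
    and Thv'_closed: "closedin (top_of_set (snd ` nat_param_space \<nu> T)) Thv'"
    and t_in: "t \<in> closure (mean_param_space \<nu> T)"
    and S1: "S1_opt \<nu> T Thv' t \<theta>h"
  shows "(\<forall>\<theta>. S1_opt \<nu> T Thv' t \<theta> \<longrightarrow> \<theta> = \<theta>h) \<and> (\<exists>!\<mu>. S2_opt \<nu> T Mu' \<theta>h \<mu>)"
proof -
  interpret exp_family \<nu> T
    by (rule exp_family.intro) (rule fam)
  have \<theta>h: "\<theta>h \<in> nat_param_space \<nu> T"
    using S1 by (simp add: S1_opt_def C_v_def)
  have "convex (C_v \<nu> T Thv')" "C_v \<nu> T Thv' \<subseteq> nat_param_space \<nu> T"
    unfolding C_v_eq_Int by (simp_all add: convex_Int convex_nat_param_space convex_Times Thv'_convex)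
  then have S1_unique: "\<forall>\<theta>. S1_opt \<nu> T Thv' t \<theta> \<longrightarrow> \<theta> = \<theta>h"
    using S1 unfolding S1_opt_def by (blast intro: log_partition_minimizer_unique)
  have "mean_param_space \<nu> T \<inter> (closure Mu' \<times> UNIV) \<noteq> {}"
    using Mu'_ne Mu'_sub closure_subset[of Mu'] by fastforce
  then have "\<exists>!\<mu>. S2_opt \<nu> T Mu' \<theta>h \<mu>"
    unfolding S2_opt_def C_u_eq_Int_closure[OF Mu'_closed] using \<theta>h Mu'_convex
    by (intro KL_projection_exists_unique closed_Times convex_Times convex_closure) simp_all
  with S1_unique show ?thesis
    by blast
qed

end
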